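(* Let $k\ge2$, $-\frac{\pi}{2}\le\theta_1<\dots<\theta_k\le\frac{\pi}{2}$, $\hat\theta_1,\dots,\hat\theta_k\in[-\frac{\pi}{2},\frac{\pi}{2}]$, and $\epsilon>0$. If $$\|\eta_{k,k}(e^{i\theta_1},\dots,e^{i\theta_k},e^{i\hat\theta_1},\dots,e^{i\hat\theta_k})\|_\infty<\Big(\frac{2}{\pi}\Big)^k\epsilon\quad\text{and}\quad\theta_{\min}=\min_{q\ne j}|\theta_q-\theta_j|\ge\Big(\frac{4\epsilon}{\lambda(k)}\Big)^{1/k},$$ then after reordering the $\hat\theta_j$, for all $j=1,\dots,k$, $$|\hat\theta_j-\theta_j|<\frac{\theta_{\min}}{2}\quad\text{and}\quad|\hat\theta_j-\theta_j|\le\frac{2^{k-1}\epsilon}{(k-2)!\,\theta_{\min}^{k-1}}.$$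
   Context: For $z_1,\dots,z_p,\hat z_1,\dots,\hat z_q\in\mathbb C$, $\eta_{p,q}(z_1,\dots,z_p,\hat z_1,\dots,\hat z_q)\in\mathbb R^p$ is the vector whose $j$-th entry is $\prod_{l=1}^q|z_j-\hat z_l|$. For an integer $k\ge1$: $\xi(1)=\frac12$; $\xi(k)=\frac{(\frac{k-1}{2})!(\frac{k-3}{2})!}{4}$ if $k\ge3$ is odd; $\xi(k)=\frac{((\frac{k-2}{2})!)^2}{4}$ if $k$ is even. For $k\ge2$: $\lambda(2)=1$ and $\lambda(k)=\xi(k-2)$ for $k\ge3$. *)

theory Defs
  imports Complex_Main "HOL-Combinatorics.Permutations"
begin

text \<open>Vectors in R^p / C^p are represented as functions on the index set {1..p}.\<close>

definition eta :: "nat \<Rightarrow> nat \<Rightarrow> (nat \<Rightarrow> complex) \<Rightarrow> (nat \<Rightarrow> complex) \<Rightarrow> nat \<Rightarrow> real" where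
  "eta p q z zh j = (\<Prod>l\<in>{1..q}. cmod (z j - zh l))"

definition linf_norm :: "nat \<Rightarrow> (nat \<Rightarrow> real) \<Rightarrow> real" where
  "linf_norm p v = Max ((\<lambda>j. \<bar>v j\<bar>) ` {1..p})"

definition xi :: "nat \<Rightarrow> real" where
  "xi k = (if k = 1 then 1/2
           else if odd k then fact ((k - 1) div 2) * fact ((k - 3) div 2) / 4
           else (fact ((k - 2) div 2))^2 / 4)"

definition lam :: "nat \<Rightarrow> real" where
  "lam k = (if k = 2 then 1 else xi (k - 2))"

end

theory Submission
  imports Defs "HOL-Analysis.Analysis" "HOL-Computational_Algebra.Polynomial"
begin

text \<open>Jordan's inequality gives \<open>|\<theta> - \<theta>'| \<le> (\<pi>/2) |e^(i\<theta>) - e^(i\<theta>')|\<close> on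
  \<open>[-\<pi>/2, \<pi>/2]\<close>, so the hypothesis on \<open>\<eta>\<close> says \<open>|P(\<theta>_j)| < \<epsilon>\<close> for every node, where
  \<open>P = \<Prod>_l (X - \<theta>'_l)\<close>. Lagrange interpolation at the nodes \<open>\<theta>_m\<close> writes \<open>P = W + \<Sum>_j P(\<theta>_j) L_j\<close>
  with \<open>W = \<Prod>_m (X - \<theta>_m)\<close>; differentiating at \<open>\<theta>_j0\<close> expresses \<open>W'(\<theta>_j0)\<close> through \<open>P'(\<theta>_j0)\<close>
  and the small values \<open>P(\<theta>_j)\<close>. If no \<open>\<theta>'_l\<close> were within \<open>\<theta>_min/2\<close> of \<open>\<theta>_j0\<close>, all these terms
  would be small compared with \<open>|W'(\<theta>_j0)| \<ge> \<theta>_min^(k-1) \<lfloor>(k-1)/2\<rfloor>! \<lceil>(k-1)/2\<rceil>!\<close>,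
  contradicting the lower bound on \<open>\<theta>_min\<close> in terms of \<open>\<lambda>(k)\<close>. By separation the resulting
  nearest-root assignment is a permutation \<open>\<sigma>\<close>; then the other factors of \<open>|P(\<theta>_j)|\<close> satisfy
  \<open>\<Prod>_(m\<noteq>j) |\<theta>_j - \<theta>'_\<sigma>m| \<ge> (\<theta>_min/2)^(k-1) (k-2)!\<close>, which yields the error bound.\<close>

section \<open>Balanced and odd factorials\<close>

definition balanced_fact :: "nat \<Rightarrow> nat" where
  "balanced_fact n = fact (n div 2) * fact ((n + 1) div 2)"

lemma balanced_fact_le_fact_mult: "balanced_fact (p + q) \<le> fact p * fact q"
proof (induction "p + q - 2 * min p q" arbitrary: p q rule: less_induct)
  case less
  show ?case
  proof (cases "p \<le> q + 1 \<and> q \<le> p + 1")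
    case True
    then consider "p = q" | "p = q + 1" | "q = p + 1" by linarith
    then show ?thesis
    proof cases
      case 2
      have "(q + 1 + q) div 2 = q" "(q + 1 + q + 1) div 2 = q + 1" by presburger+
      with 2 show ?thesis by (simp add: balanced_fact_def)
    next
      case 3
      have "(p + (p + 1)) div 2 = p" "(p + (p + 1) + 1) div 2 = p + 1" by presburger+
      with 3 show ?thesis by (simp add: balanced_fact_def mult.commute)
    qed (simp add: balanced_fact_def)
  next
    case unbalanced: False
    have shift: "fact (a - 1) * fact (b + 1) \<le> (fact a * fact b :: nat)" if "b + 1 < a" for a b
    proof -
      have "fact (a - 1) * fact (b + 1) = (b + 1) * (fact (a - 1) * (fact b :: nat))"
        by (simp add: algebra_simps)
      also have "\<dots> \<le> a * (fact (a - 1) * fact b)" using that by (intro mult_right_mono) auto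
      also have "\<dots> = fact a * fact b" using that by (cases a) (auto simp: algebra_simps)
      finally show ?thesis .
    qed
    show ?thesis
    proof (cases "q + 1 < p")
      case True
      have "balanced_fact ((p - 1) + (q + 1)) \<le> fact (p - 1) * fact (q + 1)"
        using True by (intro less.hyps) auto
      with shift[OF True] True show ?thesis by simp
    next
      case False
      with unbalanced have "p + 1 < q" by linarith
      have "balanced_fact ((p + 1) + (q - 1)) \<le> fact (p + 1) * fact (q - 1)"
        using \<open>p + 1 < q\<close> by (intro less.hyps) auto
      with shift[OF \<open>p + 1 < q\<close>] \<open>p + 1 < q\<close> show ?thesis by (simp add: mult.commute)
    qed
  qed
qed

lemma balanced_fact_add_3: "(2 * n + 7) * balanced_fact n \<le> 8 * balanced_fact (n + 3)"
proof -
  obtain a b where n: "n = a + b" "b \<le> a" "a \<le> b + 1"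
      and bf: "balanced_fact n = fact a * fact b" "balanced_fact (n + 3) = fact (b + 2) * fact (a + 1)"
  proof (cases "even n")
    case True
    then obtain m where "n = 2 * m" by blast
    moreover have "(2 * m + 3) div 2 = m + 1" "(2 * m + 3 + 1) div 2 = m + 2" by presburger+
    ultimately show ?thesis by (intro that[of m m]) (simp_all add: balanced_fact_def mult.commute)
  next
    case False
    then obtain m where "n = 2 * m + 1" using oddE by blast
    moreover have "(2 * m + 1) div 2 = m" "(2 * m + 1 + 1) div 2 = m + 1"
      "(2 * m + 1 + 3) div 2 = m + 2" "(2 * m + 1 + 3 + 1) div 2 = m + 2" by presburger+
    ultimately show ?thesis by (intro that[of "m + 1" m]) (simp_all add: balanced_fact_def mult.commute)
  qed
  have "2 * n + 7 \<le> 8 * ((b + 2) * (b + 1) * (a + 1))" using n by (simp add: algebra_simps)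
  then have "(2 * n + 7) * (fact a * fact b) \<le> 8 * ((b + 2) * (b + 1) * (a + 1)) * (fact a * fact b)"
    by (rule mult_right_mono) simp
  also have "\<dots> = 8 * (fact (b + 2) * fact (a + 1))" by (simp add: algebra_simps)
  finally show ?thesis by (simp only: bf)
qed

lemma lam_eq_balanced_fact:
  assumes "k \<ge> 4"
  shows "lam k = balanced_fact (k - 4) / 4"
proof -
  have "\<exists>m. k = 2 * m + 4 \<or> k = 2 * m + 5" using assms by presburger
  then obtain m where "k = 2 * m + 4 \<or> k = 2 * m + 5" by blast
  then show ?thesis
  proof
    assume k: "k = 2 * m + 4"
    have "(2 * m + 1) div 2 = m" by presburger
    then show ?thesis by (simp add: k lam_def xi_def balanced_fact_def power2_eq_square)
  next
    assume k: "k = 2 * m + 5"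
    have "(2 * m + 1) div 2 = m" "(2 * m + 1 + 1) div 2 = m + 1" "odd (2 * m + 3)" by presburger+
    then show ?thesis by (simp add: k lam_def xi_def balanced_fact_def algebra_simps)
  qed
qed

lemma lam_pos:
  assumes "k \<ge> 2"
  shows "lam k > 0"
proof (cases "k \<ge> 4")
  case True
  then show ?thesis by (simp add: lam_eq_balanced_fact balanced_fact_def)
next
  case False
  with assms have "k = 2 \<or> k = 3" by auto
  then show ?thesis by (auto simp: lam_def xi_def)
qed

lemma lam_le_balanced_fact:
  assumes "k \<ge> 4"
  shows "(2 * real k - 1) * lam k \<le> 2 * balanced_fact (k - 1)"
proof -
  have "real ((2 * (k - 4) + 7) * balanced_fact (k - 4)) \<le> real (8 * balanced_fact (k - 4 + 3))"
    by (simp only: of_nat_le_iff balanced_fact_add_3)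
  moreover have "k - 4 + 3 = k - 1" "real (2 * (k - 4) + 7) = 2 * real k - 1" using assms by auto
  ultimately have "(2 * real k - 1) * balanced_fact (k - 4) \<le> 8 * balanced_fact (k - 1)"
    by (simp only: of_nat_mult of_nat_numeral)
  then show ?thesis by (simp add: lam_eq_balanced_fact[OF assms])
qed

fun odd_fact :: "nat \<Rightarrow> nat" where
  "odd_fact 0 = 1"
| "odd_fact (Suc n) = (2 * n + 1) * odd_fact n"

lemma odd_fact_eq_prod: "real (odd_fact n) = (\<Prod>d\<in>{1..n}. 2 * real d - 1)"
  by (induction n) (auto simp: prod.cl_ivl_Suc algebra_simps)

lemma fact_le_odd_fact_mult: "fact (p + q - 1) \<le> odd_fact p * odd_fact q"
proof (induction "p + q" arbitrary: p q)
  case 0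
  then show ?case by simp
next
  case (Suc n)
  have main: "fact (p + q - 1) \<le> odd_fact p * odd_fact q" if pq: "p + q = Suc n" "q \<le> p" for p q
  proof -
    obtain p' where p: "p = Suc p'" using pq by (cases p) auto
    show ?thesis
    proof (cases "p' + q = 0")
      case False
      have "fact (p + q - 1) = (p' + q) * (fact (p' + q - 1) :: nat)"
        using False p by (simp add: fact_reduce)
      also have "\<dots> \<le> (2 * p' + 1) * (odd_fact p' * odd_fact q)"
        using pq p by (intro mult_mono Suc.hyps) auto
      finally show ?thesis by (simp add: p algebra_simps)
    qed (use p in auto)
  qed
  show ?case
    using main[of p q] main[of q p] Suc.hyps(2)
    by (cases "q \<le> p") (auto simp: mult.commute add.commute)
qed

section \<open>Jordan's inequality\<close>

lemma jordan_inequality: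
  assumes "0 \<le> x" "x \<le> pi / 2"
  shows "2 / pi * x \<le> sin x"
proof -
  have "concave_on {0..pi} sin"
    by (rule f''_le0_imp_concave[where f'=cos and f''="\<lambda>x. - sin x"])
       (auto intro!: derivative_eq_intros sin_ge_zero)
  moreover define t where "t = 2 / pi * x"
  moreover have "0 \<le> t" "t \<le> 1" using assms pi_gt_zero by (auto simp: t_def field_simps)
  ultimately have "(1 - t) * sin 0 + t * sin (pi / 2) \<le> sin ((1 - t) *\<^sub>R 0 + t *\<^sub>R (pi / 2))"
    by (intro concave_onD) auto
  then show ?thesis by (simp add: t_def)
qed

lemma abs_diff_le_dist_exp_i:
  assumes "\<bar>a - b\<bar> \<le> pi"
  shows "\<bar>a - b\<bar> \<le> pi / 2 * cmod (exp (\<i> * of_real a) - exp (\<i> * of_real b))"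
proof -
  have "exp (\<i> * of_real a) - exp (\<i> * of_real b) = exp (\<i> * of_real b) * (exp (\<i> * of_real (a - b)) - 1)"
    by (simp add: algebra_simps flip: exp_add)
  then have "cmod (exp (\<i> * of_real a) - exp (\<i> * of_real b)) = 2 * \<bar>sin ((a - b) / 2)\<bar>"
    by (simp only: norm_mult norm_exp_i_times dist_exp_i_1 mult_1)
  moreover have "\<bar>sin ((a - b) / 2)\<bar> = sin (\<bar>a - b\<bar> / 2)"
  proof -
    have "(a - b) / 2 = \<bar>a - b\<bar> / 2 \<or> (a - b) / 2 = - (\<bar>a - b\<bar> / 2)" by linarith
    then have "\<bar>sin ((a - b) / 2)\<bar> = \<bar>sin (\<bar>a - b\<bar> / 2)\<bar>"
      by (elim disjE) (simp_all only: sin_minus abs_minus_cancel)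
    also have "\<dots> = sin (\<bar>a - b\<bar> / 2)" using assms by (intro abs_of_nonneg sin_ge_zero) auto
    finally show ?thesis .
  qed
  ultimately show ?thesis
    using jordan_inequality[of "\<bar>a - b\<bar> / 2"] assms pi_gt_zero by (simp add: field_simps)
qed

section \<open>Separated nodes\<close>

definition separated :: "real \<Rightarrow> 'a set \<Rightarrow> ('a \<Rightarrow> real) \<Rightarrow> bool" where
  "separated \<Delta> A x \<longleftrightarrow> (\<forall>q\<in>A. \<forall>j\<in>A. q \<noteq> j \<longrightarrow> \<Delta> \<le> \<bar>x q - x j\<bar>)"

lemma separatedD: "separated \<Delta> A x \<Longrightarrow> q \<in> A \<Longrightarrow> j \<in> A \<Longrightarrow> q \<noteq> j \<Longrightarrow> \<Delta> \<le> \<bar>x q - x j\<bar>"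
  by (auto simp: separated_def)

lemma separated_Min_pairwise_dist:
  assumes "finite A"
  shows "separated (Min {\<bar>x q - x j\<bar> | q j. q \<in> A \<and> j \<in> A \<and> q \<noteq> j}) A x"
proof -
  have "finite {\<bar>x q - x j\<bar> | q j. q \<in> A \<and> j \<in> A \<and> q \<noteq> j}"
    by (rule finite_subset[of _ "(\<lambda>(q, j). \<bar>x q - x j\<bar>) ` (A \<times> A)"]) (use assms in auto)
  then show ?thesis unfolding separated_def by (blast intro: Min_le)
qed

lemma Min_pairwise_dist_pos:
  fixes x :: "'a \<Rightarrow> real"
  assumes "finite A" "inj_on x A" "q0 \<in> A" "j0 \<in> A" "q0 \<noteq> j0"
  shows "0 < Min {\<bar>x q - x j\<bar> | q j. q \<in> A \<and> j \<in> A \<and> q \<noteq> j}"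
proof -
  let ?S = "{\<bar>x q - x j\<bar> | q j. q \<in> A \<and> j \<in> A \<and> q \<noteq> j}"
  have "finite ?S"
    by (rule finite_subset[of _ "(\<lambda>(q, j). \<bar>x q - x j\<bar>) ` (A \<times> A)"]) (use assms in auto)
  moreover have "?S \<noteq> {}" using assms(3-5) by blast
  ultimately have "Min ?S \<in> ?S" by (rule Min_in)
  then obtain q j where "Min ?S = \<bar>x q - x j\<bar>" "q \<in> A" "j \<in> A" "q \<noteq> j" by blast
  moreover from this have "x q \<noteq> x j" using assms(2) by (auto dest: inj_onD)
  ultimately show ?thesis by simp
qed

lemma separated_index_gap:
  assumes mono: "strict_mono_on {1..k} x" and sep: "separated \<Delta> {1..k} x"
    and "a \<le> b" "a \<ge> 1" "b \<le> k"
  shows "real (b - a) * \<Delta> \<le> x b - x a"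
  using \<open>a \<le> b\<close> \<open>b \<le> k\<close>
proof (induction b rule: dec_induct)
  case (step n)
  have n: "n \<in> {1..k}" "Suc n \<in> {1..k}" using step \<open>a \<ge> 1\<close> by auto
  have "\<Delta> \<le> x (Suc n) - x n"
    using separatedD[OF sep n(2,1)] strict_mono_onD[OF mono n(1,2)] by simp
  then show ?case using step by (simp add: of_nat_diff algebra_simps)
qed simp

lemma separated_index_dist:
  assumes "strict_mono_on {1..k} x" "separated \<Delta> {1..k} x" "c \<in> {1..k}" "m \<in> {1..k}"
  shows "real (if m < c then c - m else m - c) * \<Delta> \<le> \<bar>x c - x m\<bar>"
  using separated_index_gap[OF assms(1,2), of m c] separated_index_gap[OF assms(1,2), of c m] assms(3,4)
  by auto

lemma prod_index_dist:
  fixes f :: "nat \<Rightarrow> 'a::comm_monoid_mult"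
  assumes "c \<in> {1..k}"
  shows "(\<Prod>m\<in>{1..k}-{c}. f (if m < c then c - m else m - c))
    = (\<Prod>d\<in>{1..c-1}. f d) * (\<Prod>d\<in>{1..k-c}. f d)"
proof -
  have "{1..k}-{c} = {1..c-1} \<union> {c+1..k}" using assms by auto
  then have "(\<Prod>m\<in>{1..k}-{c}. f (if m < c then c - m else m - c)) =
     (\<Prod>m\<in>{1..c-1}. f (if m < c then c - m else m - c)) * (\<Prod>m\<in>{c+1..k}. f (if m < c then c - m else m - c))"
    by (simp add: prod.union_disjoint)
  also have "(\<Prod>m\<in>{1..c-1}. f (if m < c then c - m else m - c)) = (\<Prod>d\<in>{1..c-1}. f d)"
    by (rule prod.reindex_bij_witness[where i="\<lambda>d. c - d" and j="\<lambda>m. c - m"]) auto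
  also have "(\<Prod>m\<in>{c+1..k}. f (if m < c then c - m else m - c)) = (\<Prod>d\<in>{1..k-c}. f d)"
    by (rule prod.reindex_bij_witness[where i="\<lambda>d. d + c" and j="\<lambda>m. m - c"]) auto
  finally show ?thesis .
qed

lemma prod_separated_dist_ge:
  assumes mono: "strict_mono_on {1..k} x" and sep: "separated \<Delta> {1..k} x"
    and "\<Delta> \<ge> 0" and j: "j \<in> {1..k}"
  shows "\<Delta> ^ (k - 1) * balanced_fact (k - 1) \<le> (\<Prod>m\<in>{1..k}-{j}. \<bar>x j - x m\<bar>)"
proof -
  have "real (balanced_fact ((j - 1) + (k - j))) \<le> real (fact (j - 1) * fact (k - j))"
    by (simp only: of_nat_le_iff balanced_fact_le_fact_mult)
  also have "\<dots> = (\<Prod>m\<in>{1..k}-{j}. real (if m < j then j - m else m - j))"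
    using prod_index_dist[OF j, of real] by (simp add: fact_prod)
  finally have "\<Delta> ^ (k - 1) * balanced_fact (k - 1)
      \<le> \<Delta> ^ (k - 1) * (\<Prod>m\<in>{1..k}-{j}. real (if m < j then j - m else m - j))"
    using j \<open>\<Delta> \<ge> 0\<close> by (intro mult_left_mono) auto
  also have "\<dots> = (\<Prod>m\<in>{1..k}-{j}. real (if m < j then j - m else m - j) * \<Delta>)"
    using j by (simp add: prod.distrib mult.commute)
  also have "\<dots> \<le> (\<Prod>m\<in>{1..k}-{j}. \<bar>x j - x m\<bar>)"
    by (rule prod_mono) (use separated_index_dist[OF mono sep j] \<open>\<Delta> \<ge> 0\<close> in auto)
  finally show ?thesis .
qed

text \<open>Each factor is at least \<open>(2d - 1) \<Delta>/2\<close> where \<open>d\<close> is the index distance, so the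
  product is bounded below by \<open>(\<Delta>/2)^(k-1)\<close> times a product of two odd factorials.\<close>
lemma prod_perturbed_dist_ge:
  assumes mono: "strict_mono_on {1..k} x" and sep: "separated \<Delta> {1..k} x"
    and "\<Delta> \<ge> 0" and j: "j \<in> {1..k}"
    and close: "\<forall>m\<in>{1..k}. \<bar>x m - y m\<bar> < \<Delta> / 2"
  shows "(\<Delta> / 2) ^ (k - 1) * fact (k - 2) \<le> (\<Prod>m\<in>{1..k}-{j}. \<bar>x j - y m\<bar>)"
proof -
  define d where "d m = (if m < j then j - m else m - j)" for m
  have "real (fact ((j - 1) + (k - j) - 1)) \<le> real (odd_fact (j - 1) * odd_fact (k - j))"
    by (simp only: of_nat_le_iff fact_le_odd_fact_mult)
  also have "\<dots> = (\<Prod>m\<in>{1..k}-{j}. 2 * real (d m) - 1)"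
    using prod_index_dist[OF j, of "\<lambda>d. 2 * real d - 1"] by (simp add: d_def odd_fact_eq_prod)
  finally have "(\<Delta> / 2) ^ (k - 1) * fact (k - 2)
      \<le> (\<Delta> / 2) ^ (k - 1) * (\<Prod>m\<in>{1..k}-{j}. 2 * real (d m) - 1)"
    using j \<open>\<Delta> \<ge> 0\<close> by (intro mult_left_mono) (auto simp: numeral_2_eq_2)
  also have "\<dots> = (\<Prod>m\<in>{1..k}-{j}. \<Delta> / 2 * (2 * real (d m) - 1))"
    using j by (simp only: prod.distrib prod_constant) simp
  also have "\<dots> \<le> (\<Prod>m\<in>{1..k}-{j}. \<bar>x j - y m\<bar>)"
  proof (rule prod_mono)
    fix m assume m: "m \<in> {1..k}-{j}"
    have "real (d m) * \<Delta> \<le> \<bar>x j - x m\<bar>" using separated_index_dist[OF mono sep j] m by (auto simp: d_def)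
    moreover have "\<bar>x m - y m\<bar> < \<Delta> / 2" using m close by auto
    moreover have "1 \<le> real (d m)" using m by (auto simp: d_def)
    then have "1 * \<Delta> \<le> real (d m) * \<Delta>" using \<open>\<Delta> \<ge> 0\<close> by (rule mult_right_mono)
    moreover have "\<Delta> / 2 * (2 * real (d m) - 1) = real (d m) * \<Delta> - \<Delta> / 2" by (simp add: algebra_simps)
    moreover have "\<bar>x j - x m\<bar> \<le> \<bar>x j - y m\<bar> + \<bar>x m - y m\<bar>" by linarith
    ultimately show "0 \<le> \<Delta> / 2 * (2 * real (d m) - 1) \<and> \<Delta> / 2 * (2 * real (d m) - 1) \<le> \<bar>x j - y m\<bar>"
      by linarith
  qed
  finally show ?thesis .
qed

section \<open>Lagrange interpolation\<close>

definition vanishing_poly :: "'a set \<Rightarrow> ('a \<Rightarrow> 'b::field) \<Rightarrow> 'b poly" where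
  "vanishing_poly A x = (\<Prod>a\<in>A. [:- x a, 1:])"

lemma poly_vanishing_poly: "poly (vanishing_poly A x) t = (\<Prod>a\<in>A. t - x a)"
  unfolding vanishing_poly_def poly_prod by simp

lemma degree_vanishing_poly: "finite A \<Longrightarrow> degree (vanishing_poly A x) = card A"
  unfolding vanishing_poly_def by (subst degree_prod_eq_sum_degree) auto

lemma lead_coeff_vanishing_poly: "finite A \<Longrightarrow> coeff (vanishing_poly A x) (card A) = 1"
  using lead_coeff_prod[of "\<lambda>a. [:- x a, 1:]" A] degree_vanishing_poly[of A x]
  by (simp add: vanishing_poly_def)

lemma poly_pderiv_vanishing_poly:
  "poly (pderiv (vanishing_poly A x)) t = (\<Sum>a\<in>A. \<Prod>b\<in>A-{a}. t - x b)"
  by (simp add: vanishing_poly_def pderiv_prod poly_sum poly_prod pderiv_pCons)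

lemma poly_pderiv_vanishing_poly_node:
  assumes "finite A" "a0 \<in> A"
  shows "poly (pderiv (vanishing_poly A x)) (x a0) = (\<Prod>b\<in>A-{a0}. x a0 - x b)"
proof -
  have "(\<Sum>a\<in>A-{a0}. \<Prod>b\<in>A-{a}. x a0 - x b) = 0"
    using assms by (intro sum.neutral ballI prod_zero) (auto intro!: bexI[of _ a0])
  then show ?thesis using assms by (simp add: poly_pderiv_vanishing_poly sum.remove)
qed

definition lagrange_basis :: "('a \<Rightarrow> 'b::field) \<Rightarrow> 'a set \<Rightarrow> 'a \<Rightarrow> 'b poly" where
  "lagrange_basis x A j = smult (1 / (\<Prod>m\<in>A-{j}. x j - x m)) (vanishing_poly (A - {j}) x)"

lemma poly_lagrange_basis_node:
  assumes "finite A" "inj_on x A" "i \<in> A" "j \<in> A"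
  shows "poly (lagrange_basis x A j) (x i) = (if i = j then 1 else 0)"
proof (cases "i = j")
  case True
  have "(\<Prod>m\<in>A-{j}. x j - x m) \<noteq> 0"
    using assms by (auto simp: prod_zero_iff dest: inj_onD)
  with True show ?thesis by (simp add: lagrange_basis_def poly_vanishing_poly)
next
  case False
  then have "(\<Prod>m\<in>A-{j}. x i - x m) = 0" using assms by (intro prod_zero) auto
  with False show ?thesis by (simp add: lagrange_basis_def poly_vanishing_poly)
qed

lemma coeff_lagrange_basis_eq_0:
  assumes "finite A" "j \<in> A" "card A \<le> n"
  shows "coeff (lagrange_basis x A j) n = 0"
proof -
  have "degree (lagrange_basis x A j) \<le> card (A - {j})"
    unfolding lagrange_basis_def using degree_smult_le degree_vanishing_poly assms(1)
    by (metis finite_Diff)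
  also have "\<dots> < n" using assms card_gt_0_iff[of A] by (auto simp: card_Diff_singleton)
  finally show ?thesis by (rule coeff_eq_0)
qed

text \<open>A monic polynomial of degree \<open>|A|\<close> is the vanishing polynomial of the nodes plus its
  Lagrange interpolant, since the difference has degree below \<open>|A|\<close> and vanishes at the \<open>|A|\<close> nodes.\<close>
lemma monic_eq_vanishing_poly_plus_interpolant:
  fixes P :: "'b::field poly"
  assumes A: "finite A" and inj: "inj_on x A"
    and P: "degree P = card A" "coeff P (card A) = 1"
  shows "P = vanishing_poly A x + (\<Sum>j\<in>A. smult (poly P (x j)) (lagrange_basis x A j))"
proof -
  define Q where "Q = P - vanishing_poly A x - (\<Sum>j\<in>A. smult (poly P (x j)) (lagrange_basis x A j))"
  have high: "coeff Q n = 0" if "card A \<le> n" for n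
  proof -
    have "degree (vanishing_poly A x) = card A" "coeff (vanishing_poly A x) (card A) = 1"
      using A by (simp_all add: degree_vanishing_poly lead_coeff_vanishing_poly)
    then have "coeff P n = coeff (vanishing_poly A x) n"
      using that P by (cases "n = card A") (simp_all add: coeff_eq_0)
    then show ?thesis
      using that A by (simp add: Q_def coeff_sum coeff_lagrange_basis_eq_0)
  qed
  have roots: "poly Q (x i) = 0" if "i \<in> A" for i
  proof -
    have "(\<Sum>j\<in>A. poly P (x j) * poly (lagrange_basis x A j) (x i)) = (\<Sum>j\<in>A. if i = j then poly P (x j) else 0)"
      using that A inj by (intro sum.cong) (simp_all add: poly_lagrange_basis_node)
    also have "\<dots> = poly P (x i)" using that A by simp
    finally have "(\<Sum>j\<in>A. poly P (x j) * poly (lagrange_basis x A j) (x i)) = poly P (x i)" .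
    moreover have "poly (vanishing_poly A x) (x i) = 0"
      using that A by (auto simp: poly_vanishing_poly prod_zero_iff)
    ultimately show ?thesis by (simp add: Q_def poly_sum)
  qed
  have "Q = 0"
  proof (rule ccontr)
    assume "Q \<noteq> 0"
    then have "degree Q < card A" using high leading_coeff_neq_0 not_less by blast
    moreover have "card A = card (x ` A)" using inj by (simp add: card_image)
    also have "\<dots> \<le> card {t. poly Q t = 0}"
      using roots poly_roots_finite[OF \<open>Q \<noteq> 0\<close>] by (intro card_mono) auto
    also have "\<dots> \<le> degree Q" using \<open>Q \<noteq> 0\<close> by (rule card_poly_roots_bound)
    finally show False by simp
  qed
  then show ?thesis by (simp add: Q_def algebra_simps)
qed

lemma pderiv_sum: "pderiv (\<Sum>x\<in>A. f x) = (\<Sum>x\<in>A. pderiv (f x))"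
  by (induction A rule: infinite_finite_induct) (auto simp: pderiv_add)

lemma prod_node_diff_eq_pderiv_monic:
  fixes P :: "'b::field poly"
  assumes A: "finite A" and inj: "inj_on x A" and j0: "j0 \<in> A"
    and P: "degree P = card A" "coeff P (card A) = 1"
  shows "(\<Prod>m\<in>A-{j0}. x j0 - x m) = poly (pderiv P) (x j0)
     - (\<Sum>j\<in>A. poly P (x j) * poly (pderiv (lagrange_basis x A j)) (x j0))"
proof -
  have "pderiv P = pderiv (vanishing_poly A x) + (\<Sum>j\<in>A. smult (poly P (x j)) (pderiv (lagrange_basis x A j)))"
    by (subst monic_eq_vanishing_poly_plus_interpolant[OF A inj P])
       (simp only: pderiv_add pderiv_sum pderiv_smult)
  then show ?thesis using A j0 by (simp add: poly_sum poly_pderiv_vanishing_poly_node)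
qed

lemma abs_poly_pderiv_vanishing_poly_le:
  fixes h :: "'a \<Rightarrow> real"
  assumes A: "finite A" and far: "\<forall>l\<in>A. r \<le> \<bar>t - h l\<bar>" and "r > 0"
  shows "\<bar>poly (pderiv (vanishing_poly A h)) t\<bar> \<le> card A / r * (\<Prod>l\<in>A. \<bar>t - h l\<bar>)"
proof -
  have "\<bar>poly (pderiv (vanishing_poly A h)) t\<bar> \<le> (\<Sum>l\<in>A. \<bar>\<Prod>m\<in>A-{l}. t - h m\<bar>)"
    unfolding poly_pderiv_vanishing_poly by (rule sum_abs)
  also have "\<dots> \<le> (\<Sum>l\<in>A. (\<Prod>m\<in>A. \<bar>t - h m\<bar>) / r)"
  proof (rule sum_mono)
    fix l assume l: "l \<in> A"
    have "r * (\<Prod>m\<in>A-{l}. \<bar>t - h m\<bar>) \<le> \<bar>t - h l\<bar> * (\<Prod>m\<in>A-{l}. \<bar>t - h m\<bar>)"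
      using far l by (intro mult_right_mono prod_nonneg) auto
    also have "\<dots> = (\<Prod>m\<in>A. \<bar>t - h m\<bar>)" using A l by (simp add: prod.remove)
    finally show "\<bar>\<Prod>m\<in>A-{l}. t - h m\<bar> \<le> (\<Prod>m\<in>A. \<bar>t - h m\<bar>) / r"
      using \<open>r > 0\<close> by (simp add: abs_prod pos_le_divide_eq mult.commute)
  qed
  also have "\<dots> = card A / r * (\<Prod>l\<in>A. \<bar>t - h l\<bar>)" by simp
  finally show ?thesis .
qed

lemma prod_abs_node_diff_pos:
  assumes "finite A" "separated \<Delta> A x" "\<Delta> > 0" "j \<in> A"
  shows "(\<Prod>m\<in>A-{j}. \<bar>x j - x m\<bar>) > 0"
  using assms by (intro prod_pos) (auto dest: separatedD[of \<Delta> A x j])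

lemma abs_poly_pderiv_lagrange_basis_self_le:
  assumes A: "finite A" and sep: "separated \<Delta> A x" and "\<Delta> > 0" and j: "j \<in> A"
  shows "\<bar>poly (pderiv (lagrange_basis x A j)) (x j)\<bar> \<le> (real (card A) - 1) / \<Delta>"
proof -
  define c where "c = (\<Prod>m\<in>A-{j}. \<bar>x j - x m\<bar>)"
  have "c > 0" unfolding c_def using prod_abs_node_diff_pos[OF assms] .
  have "\<bar>poly (pderiv (vanishing_poly (A-{j}) x)) (x j)\<bar> \<le> card (A-{j}) / \<Delta> * c"
    unfolding c_def using A sep j \<open>\<Delta> > 0\<close>
    by (intro abs_poly_pderiv_vanishing_poly_le) (auto simp: separated_def)
  moreover have "\<bar>poly (pderiv (lagrange_basis x A j)) (x j)\<bar> = \<bar>poly (pderiv (vanishing_poly (A-{j}) x)) (x j)\<bar> / c"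
    by (simp add: lagrange_basis_def pderiv_smult c_def abs_prod)
  moreover have "real (card (A-{j})) = real (card A) - 1"
  proof -
    have "card A \<ge> 1" using A j card_gt_0_iff[of A] by auto
    then show ?thesis using A j by (simp add: card_Diff_singleton of_nat_diff)
  qed
  ultimately show ?thesis using \<open>c > 0\<close> by (simp add: divide_le_eq)
qed

lemma abs_poly_pderiv_lagrange_basis_other_le:
  assumes A: "finite A" and sep: "separated \<Delta> A x" and "\<Delta> > 0"
    and j: "j \<in> A" and j0: "j0 \<in> A" "j \<noteq> j0"
  shows "\<bar>poly (pderiv (lagrange_basis x A j)) (x j0)\<bar>
    \<le> (\<Prod>m\<in>A-{j0}. \<bar>x j0 - x m\<bar>) / (\<Delta> * (\<Prod>m\<in>A-{j}. \<bar>x j - x m\<bar>))"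
proof -
  define R where "R = (\<Prod>m\<in>A-{j}-{j0}. \<bar>x j0 - x m\<bar>)"
  have "A-{j}-{j0} = A-{j0}-{j}" by auto
  then have "(\<Prod>m\<in>A-{j0}. \<bar>x j0 - x m\<bar>) = \<bar>x j0 - x j\<bar> * R"
    using A j j0 by (simp add: R_def prod.remove[of "A-{j0}" j])
  moreover have "\<Delta> \<le> \<bar>x j0 - x j\<bar>" using sep j j0 by (auto dest: separatedD)
  ultimately have "\<Delta> * R \<le> (\<Prod>m\<in>A-{j0}. \<bar>x j0 - x m\<bar>)"
    by (simp add: R_def mult_right_mono prod_nonneg)
  moreover have "\<bar>poly (pderiv (lagrange_basis x A j)) (x j0)\<bar> = R / (\<Prod>m\<in>A-{j}. \<bar>x j - x m\<bar>)"
    using A j j0 by (simp add: lagrange_basis_def pderiv_smult poly_pderiv_vanishing_poly_node R_def abs_prod)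
  moreover have "(\<Prod>m\<in>A-{j}. \<bar>x j - x m\<bar>) > 0" using prod_abs_node_diff_pos[OF A sep \<open>\<Delta> > 0\<close> j] .
  ultimately show ?thesis using \<open>\<Delta> > 0\<close> by (simp add: divide_right_mono field_simps)
qed

lemma abs_poly_pderiv_lagrange_basis_le:
  fixes x :: "nat \<Rightarrow> real"
  assumes mono: "strict_mono_on {1..k} x" and sep: "separated \<Delta> {1..k} x" and "\<Delta> > 0"
    and j: "j \<in> {1..k}" and j0: "j0 \<in> {1..k}"
  shows "\<bar>poly (pderiv (lagrange_basis x {1..k} j)) (x j0)\<bar>
    \<le> (if j = j0 then real k - 1 else 1) * (\<Prod>m\<in>{1..k}-{j0}. \<bar>x j0 - x m\<bar>) / (\<Delta> ^ k * balanced_fact (k - 1))"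
proof -
  define G where "G = \<Delta> ^ (k - 1) * balanced_fact (k - 1)"
  have lower: "G \<le> (\<Prod>m\<in>{1..k}-{i}. \<bar>x i - x m\<bar>)" if "i \<in> {1..k}" for i
    unfolding G_def using prod_separated_dist_ge[OF mono sep _ that] \<open>\<Delta> > 0\<close> by simp
  have "G > 0" using \<open>\<Delta> > 0\<close> by (simp add: G_def balanced_fact_def)
  have "\<Delta> ^ k = \<Delta> * \<Delta> ^ (k - 1)" using j by (simp add: power_eq_if)
  then have D: "\<Delta> ^ k * balanced_fact (k - 1) = \<Delta> * G" by (simp add: G_def)
  show ?thesis
  proof (cases "j = j0")
    case True
    have "\<bar>poly (pderiv (lagrange_basis x {1..k} j)) (x j0)\<bar> \<le> (real k - 1) / \<Delta>"
      using abs_poly_pderiv_lagrange_basis_self_le[OF _ sep \<open>\<Delta> > 0\<close> j] True by simp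
    also have "\<dots> = (real k - 1) * G / (\<Delta> * G)" using \<open>G > 0\<close> by simp
    also have "\<dots> \<le> (real k - 1) * (\<Prod>m\<in>{1..k}-{j0}. \<bar>x j0 - x m\<bar>) / (\<Delta> * G)"
      using j0 lower[OF j0] \<open>\<Delta> > 0\<close> \<open>G > 0\<close> by (intro divide_right_mono mult_left_mono) auto
    finally show ?thesis using True D by simp
  next
    case False
    have "\<bar>poly (pderiv (lagrange_basis x {1..k} j)) (x j0)\<bar>
        \<le> (\<Prod>m\<in>{1..k}-{j0}. \<bar>x j0 - x m\<bar>) / (\<Delta> * (\<Prod>m\<in>{1..k}-{j}. \<bar>x j - x m\<bar>))"
      using abs_poly_pderiv_lagrange_basis_other_le[OF _ sep \<open>\<Delta> > 0\<close> j j0 False] by simp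
    also have "\<dots> \<le> (\<Prod>m\<in>{1..k}-{j0}. \<bar>x j0 - x m\<bar>) / (\<Delta> * G)"
      using lower[OF j] \<open>\<Delta> > 0\<close> \<open>G > 0\<close>
      by (intro divide_left_mono mult_left_mono mult_pos_pos prod_nonneg) auto
    finally show ?thesis using False D by simp
  qed
qed

section \<open>Locating the roots\<close>

lemma abs_sum_lagrange_terms_le:
  fixes x v :: "nat \<Rightarrow> real"
  assumes mono: "strict_mono_on {1..k} x" and sep: "separated \<Delta> {1..k} x" and "\<Delta> > 0"
    and j0: "j0 \<in> {1..k}" and v: "\<forall>j\<in>{1..k}. \<bar>v j\<bar> \<le> \<epsilon>"
  shows "\<bar>\<Sum>j\<in>{1..k}. v j * poly (pderiv (lagrange_basis x {1..k} j)) (x j0)\<bar>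
    \<le> (2 * real k - 2) * (\<epsilon> * (\<Prod>m\<in>{1..k}-{j0}. \<bar>x j0 - x m\<bar>) / (\<Delta> ^ k * balanced_fact (k - 1)))"
    (is "_ \<le> _ * ?B")
proof -
  have summand: "\<bar>v j * poly (pderiv (lagrange_basis x {1..k} j)) (x j0)\<bar>
      \<le> (if j = j0 then real k - 1 else 1) * ?B" if j: "j \<in> {1..k}" for j
  proof -
    have "\<bar>v j\<bar> * \<bar>poly (pderiv (lagrange_basis x {1..k} j)) (x j0)\<bar>
        \<le> \<epsilon> * ((if j = j0 then real k - 1 else 1) * (\<Prod>m\<in>{1..k}-{j0}. \<bar>x j0 - x m\<bar>)
          / (\<Delta> ^ k * balanced_fact (k - 1)))"
      using v j abs_poly_pderiv_lagrange_basis_le[OF mono sep \<open>\<Delta> > 0\<close> j j0]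
      by (intro mult_mono) auto
    then show ?thesis by (simp add: abs_mult mult_ac)
  qed
  have "(\<Sum>j\<in>{1..k}. if j = j0 then real k - 1 else 1)
      = (real k - 1) + (\<Sum>j\<in>{1..k}-{j0}. if j = j0 then real k - 1 else 1)"
    using j0 by (subst sum.remove[of _ j0]) auto
  also have "\<dots> = (real k - 1) + (\<Sum>j\<in>{1..k}-{j0}. 1)"
    by (intro arg_cong2[where f="(+)"] sum.cong) auto
  also have "\<dots> = 2 * real k - 2" using j0 by (simp add: of_nat_diff)
  finally have count: "(\<Sum>j\<in>{1..k}. (if j = j0 then real k - 1 else 1) * ?B) = (2 * real k - 2) * ?B"
    by (simp only: sum_distrib_right[symmetric])
  have "\<bar>\<Sum>j\<in>{1..k}. v j * poly (pderiv (lagrange_basis x {1..k} j)) (x j0)\<bar>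
      \<le> (\<Sum>j\<in>{1..k}. \<bar>v j * poly (pderiv (lagrange_basis x {1..k} j)) (x j0)\<bar>)"
    by (rule sum_abs)
  also have "\<dots> \<le> (2 * real k - 2) * ?B"
    unfolding count[symmetric] by (rule sum_mono) (rule summand)
  finally show ?thesis .
qed

text \<open>With \<open>X = \<Prod>m\<noteq>j0. \<bar>x j0 - x m\<bar> \<ge> \<Delta>^(k-1) balanced_fact (k-1)\<close>, every term of the
  differentiated interpolation identity at \<open>x j0\<close> is at most a small multiple of
  \<open>\<epsilon> X / (\<Delta>^k balanced_fact (k-1))\<close>, while the identity has absolute value \<open>X\<close>.\<close>
lemma separated_far_node_bound:
  fixes x h :: "nat \<Rightarrow> real"
  assumes mono: "strict_mono_on {1..k} x" and sep: "separated \<Delta> {1..k} x" and "\<Delta> > 0"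
    and small: "\<forall>j\<in>{1..k}. (\<Prod>l\<in>{1..k}. \<bar>x j - h l\<bar>) < \<epsilon>"
    and j0: "j0 \<in> {1..k}" and far: "\<forall>l\<in>{1..k}. \<Delta> / 2 \<le> \<bar>x j0 - h l\<bar>"
  shows "\<Delta> ^ k * balanced_fact (k - 1) < (4 * real k - 2) * \<epsilon>"
proof -
  define P where "P = vanishing_poly {1..k} h"
  define X where "X = (\<Prod>m\<in>{1..k}-{j0}. \<bar>x j0 - x m\<bar>)"
  define D where "D = \<Delta> ^ k * balanced_fact (k - 1)"
  define B where "B = \<epsilon> * X / D"
  have "D > 0" using \<open>\<Delta> > 0\<close> by (simp add: D_def balanced_fact_def)
  have "X > 0" unfolding X_def by (rule prod_abs_node_diff_pos[OF _ sep \<open>\<Delta> > 0\<close> j0]) simp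
  have "0 \<le> (\<Prod>l\<in>{1..k}. \<bar>x j0 - h l\<bar>)" by (intro prod_nonneg) auto
  with small j0 have "\<epsilon> > 0" by fastforce
  have "D = \<Delta> * (\<Delta> ^ (k - 1) * balanced_fact (k - 1))"
    using j0 by (simp add: D_def power_eq_if)
  also have "\<dots> \<le> \<Delta> * X"
    unfolding X_def using prod_separated_dist_ge[OF mono sep _ j0] \<open>\<Delta> > 0\<close> by simp
  finally have "1 / \<Delta> \<le> X / D" using \<open>D > 0\<close> \<open>\<Delta> > 0\<close> by (simp add: field_simps)
  have "\<bar>poly (pderiv P) (x j0)\<bar> \<le> real k / (\<Delta> / 2) * (\<Prod>l\<in>{1..k}. \<bar>x j0 - h l\<bar>)"
    unfolding P_def using abs_poly_pderiv_vanishing_poly_le[of "{1..k}" "\<Delta> / 2" "x j0" h] far \<open>\<Delta> > 0\<close>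
    by simp
  also have "\<dots> < real k / (\<Delta> / 2) * \<epsilon>"
    using small j0 \<open>\<Delta> > 0\<close> by (intro mult_strict_left_mono) auto
  also have "\<dots> = 2 * real k * \<epsilon> * (1 / \<Delta>)" by simp
  also have "\<dots> \<le> 2 * real k * B"
    using \<open>1 / \<Delta> \<le> X / D\<close> \<open>\<epsilon> > 0\<close> mult_left_mono[of "1 / \<Delta>" "X / D" "2 * real k * \<epsilon>"]
    by (simp add: B_def mult_ac)
  finally have deriv: "\<bar>poly (pderiv P) (x j0)\<bar> < 2 * real k * B" .
  have interpolant: "\<bar>\<Sum>j\<in>{1..k}. poly P (x j) * poly (pderiv (lagrange_basis x {1..k} j)) (x j0)\<bar>
      \<le> (2 * real k - 2) * B"
    unfolding B_def X_def D_def using small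
    by (intro abs_sum_lagrange_terms_le[OF mono sep \<open>\<Delta> > 0\<close> j0])
       (simp add: P_def poly_vanishing_poly abs_prod less_imp_le)
  have "X = \<bar>poly (pderiv P) (x j0) - (\<Sum>j\<in>{1..k}. poly P (x j) * poly (pderiv (lagrange_basis x {1..k} j)) (x j0))\<bar>"
    unfolding X_def P_def abs_prod[symmetric]
    using prod_node_diff_eq_pderiv_monic[OF _ strict_mono_on_imp_inj_on[OF mono] j0
        degree_vanishing_poly lead_coeff_vanishing_poly]
    by simp
  also have "\<dots> \<le> \<bar>poly (pderiv P) (x j0)\<bar>
      + \<bar>\<Sum>j\<in>{1..k}. poly P (x j) * poly (pderiv (lagrange_basis x {1..k} j)) (x j0)\<bar>"
    by (rule abs_triangle_ineq4)
  finally have "X < 2 * real k * B + (2 * real k - 2) * B" using deriv interpolant by linarith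
  then have "X * D < (4 * real k - 2) * \<epsilon> * X" using \<open>D > 0\<close> by (simp add: B_def field_simps)
  then show ?thesis using \<open>X > 0\<close> unfolding D_def by (simp add: mult.commute)
qed

lemma exists_root_near_node:
  fixes x h :: "nat \<Rightarrow> real"
  assumes "k \<ge> 2" and mono: "strict_mono_on {1..k} x" and sep: "separated \<Delta> {1..k} x" and "\<Delta> > 0"
    and small: "\<forall>j\<in>{1..k}. (\<Prod>l\<in>{1..k}. \<bar>x j - h l\<bar>) < \<epsilon>"
    and eps: "4 * \<epsilon> \<le> \<Delta> ^ k * lam k" and j0: "j0 \<in> {1..k}"
  shows "\<exists>l\<in>{1..k}. \<bar>x j0 - h l\<bar> < \<Delta> / 2"
proof (rule ccontr)
  assume "\<not> ?thesis"
  then have far: "\<forall>l\<in>{1..k}. \<Delta> / 2 \<le> \<bar>x j0 - h l\<bar>" by auto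
  show False
  proof (cases "k \<ge> 4")
    case True
    have "(2 * real k - 1) * (4 * \<epsilon>) \<le> \<Delta> ^ k * ((2 * real k - 1) * lam k)"
      using eps \<open>k \<ge> 2\<close> by (simp add: mult_left_mono mult.left_commute)
    also have "\<dots> \<le> \<Delta> ^ k * (2 * balanced_fact (k - 1))"
      using lam_le_balanced_fact[OF True] \<open>\<Delta> > 0\<close> by (intro mult_left_mono) auto
    finally have "(4 * real k - 2) * \<epsilon> \<le> \<Delta> ^ k * balanced_fact (k - 1)"
      by (simp add: algebra_simps)
    with separated_far_node_bound[OF mono sep \<open>\<Delta> > 0\<close> small j0 far] show False by simp
  next
    case False
    \<comment> \<open>For \<open>k = 2, 3\<close> the hypothesis reads \<open>\<epsilon> \<le> (\<Delta>/2)^k\<close>, so the product itself is too large.\<close>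
    with \<open>k \<ge> 2\<close> have "k = 2 \<or> k = 3" by auto
    then have "\<epsilon> \<le> (\<Delta> / 2) ^ k" using eps by (auto simp: lam_def xi_def power_divide)
    also have "\<dots> = (\<Prod>l\<in>{1..k}. \<Delta> / 2)" by simp
    also have "\<dots> \<le> (\<Prod>l\<in>{1..k}. \<bar>x j0 - h l\<bar>)"
      by (rule prod_mono) (use far \<open>\<Delta> > 0\<close> in auto)
    finally show False using small j0 by fastforce
  qed
qed

lemma exists_permutes_within_half_separation:
  assumes A: "finite A" and sep: "separated \<Delta> A x"
    and near: "\<forall>j\<in>A. \<exists>l\<in>A. \<bar>x j - h l\<bar> < \<Delta> / 2"
  shows "\<exists>\<sigma>. \<sigma> permutes A \<and> (\<forall>j\<in>A. \<bar>x j - h (\<sigma> j)\<bar> < \<Delta> / 2)"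
proof -
  define \<sigma> where "\<sigma> j = (if j \<in> A then (SOME l. l \<in> A \<and> \<bar>x j - h l\<bar> < \<Delta> / 2) else j)" for j
  have \<sigma>: "\<sigma> j \<in> A \<and> \<bar>x j - h (\<sigma> j)\<bar> < \<Delta> / 2" if "j \<in> A" for j
    unfolding \<sigma>_def using someI_ex[of "\<lambda>l. l \<in> A \<and> \<bar>x j - h l\<bar> < \<Delta> / 2"] near that by auto
  have "inj_on \<sigma> A"
  proof (rule inj_onI)
    fix a b assume ab: "a \<in> A" "b \<in> A" "\<sigma> a = \<sigma> b"
    have "\<bar>x b - h (\<sigma> a)\<bar> < \<Delta> / 2" using \<sigma>[OF ab(2)] ab(3) by simp
    then have "\<bar>x a - x b\<bar> < \<Delta>" using \<sigma>[OF ab(1)] by linarith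
    then show "a = b" using separatedD[OF sep ab(1,2)] by force
  qed
  moreover have "\<sigma> ` A = A" using A \<sigma> \<open>inj_on \<sigma> A\<close> by (intro endo_inj_surj) auto
  ultimately have "\<sigma> permutes A"
    by (intro bij_imp_permutes) (auto simp: bij_betw_def \<sigma>_def)
  then show ?thesis using \<sigma> by blast
qed

lemma matched_root_error_bound:
  fixes x h :: "nat \<Rightarrow> real"
  assumes mono: "strict_mono_on {1..k} x" and sep: "separated \<Delta> {1..k} x" and "\<Delta> > 0"
    and \<sigma>: "\<sigma> permutes {1..k}" and close: "\<forall>m\<in>{1..k}. \<bar>x m - h (\<sigma> m)\<bar> < \<Delta> / 2"
    and j: "j \<in> {1..k}" and small: "(\<Prod>l\<in>{1..k}. \<bar>x j - h l\<bar>) < \<epsilon>"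
  shows "\<bar>h (\<sigma> j) - x j\<bar> < 2 ^ (k - 1) * \<epsilon> / (fact (k - 2) * \<Delta> ^ (k - 1))"
proof -
  define B where "B = (\<Delta> / 2) ^ (k - 1) * fact (k - 2)"
  have "B > 0" using \<open>\<Delta> > 0\<close> by (simp add: B_def)
  have "\<bar>h (\<sigma> j) - x j\<bar> * B \<le> \<bar>x j - h (\<sigma> j)\<bar> * (\<Prod>m\<in>{1..k}-{j}. \<bar>x j - h (\<sigma> m)\<bar>)"
    unfolding B_def using prod_perturbed_dist_ge[OF mono sep _ j close] \<open>\<Delta> > 0\<close>
    by (simp add: abs_minus_commute mult_left_mono)
  also have "\<dots> = (\<Prod>m\<in>{1..k}. \<bar>x j - h (\<sigma> m)\<bar>)" using j by (simp add: prod.remove)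
  also have "\<dots> = (\<Prod>l\<in>{1..k}. \<bar>x j - h l\<bar>)"
    using prod.reindex_bij_betw[OF permutes_imp_bij[OF \<sigma>], of "\<lambda>l. \<bar>x j - h l\<bar>"] by simp
  finally have "\<bar>h (\<sigma> j) - x j\<bar> < \<epsilon> / B" using small \<open>B > 0\<close> by (simp add: pos_less_divide_eq)
  also have "\<epsilon> / B = 2 ^ (k - 1) * \<epsilon> / (fact (k - 2) * \<Delta> ^ (k - 1))"
    by (simp add: B_def power_divide field_simps)
  finally show ?thesis .
qed

lemma prod_abs_diff_lt_of_linf_norm_eta:
  assumes angles: "\<forall>j\<in>{1..k}. - (pi/2) \<le> \<theta> j \<and> \<theta> j \<le> pi/2"
    "\<forall>j\<in>{1..k}. - (pi/2) \<le> \<theta>h j \<and> \<theta>h j \<le> pi/2"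
    and eta: "linf_norm k (eta k k (\<lambda>j. exp (\<i> * of_real (\<theta> j))) (\<lambda>j. exp (\<i> * of_real (\<theta>h j))))
      < (2 / pi) ^ k * \<epsilon>"
    and j: "j \<in> {1..k}"
  shows "(\<Prod>l\<in>{1..k}. \<bar>\<theta> j - \<theta>h l\<bar>) < \<epsilon>"
proof -
  define z where "z = (\<lambda>j. exp (\<i> * complex_of_real (\<theta> j)))"
  define zh where "zh = (\<lambda>j. exp (\<i> * complex_of_real (\<theta>h j)))"
  have "\<bar>\<theta> j - \<theta>h l\<bar> \<le> pi" if "l \<in> {1..k}" for l
    using angles(1)[rule_format, OF j] angles(2)[rule_format, OF that] by linarith
  then have "(\<Prod>l\<in>{1..k}. \<bar>\<theta> j - \<theta>h l\<bar>) \<le> (\<Prod>l\<in>{1..k}. pi / 2 * cmod (z j - zh l))"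
    unfolding z_def zh_def by (intro prod_mono abs_diff_le_dist_exp_i conjI) auto
  also have "\<dots> = (pi / 2) ^ k * eta k k z zh j" unfolding eta_def by (simp only: prod.distrib) simp
  also have "\<dots> \<le> (pi / 2) ^ k * linf_norm k (eta k k z zh)"
    unfolding linf_norm_def using j by (intro mult_left_mono order_trans[OF abs_ge_self Max_ge]) auto
  also have "\<dots> < (pi / 2) ^ k * ((2 / pi) ^ k * \<epsilon>)"
    using eta by (simp add: z_def zh_def)
  also have "\<dots> = \<epsilon>" by (simp flip: power_mult_distrib)
  finally show ?thesis .
qed

lemma le_power_of_powr_inverse_le:
  assumes "a > 0" "n > 0" "a powr (1 / real n) \<le> b"
  shows "a \<le> b ^ n"
proof -
  have "a = (a powr (1 / real n)) ^ n"
    using assms by (simp add: powr_realpow[symmetric] powr_powr)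
  also have "\<dots> \<le> b ^ n" using assms by (intro power_mono) auto
  finally show ?thesis .
qed

theorem corollary3p2:
  fixes k :: nat and \<theta> \<theta>h :: "nat \<Rightarrow> real" and \<epsilon> :: real
  assumes "k \<ge> 2"
    and "\<forall>j\<in>{1..k}. - (pi/2) \<le> \<theta> j \<and> \<theta> j \<le> pi/2"
    and "\<forall>i\<in>{1..k}. \<forall>j\<in>{1..k}. i < j \<longrightarrow> \<theta> i < \<theta> j"
    and "\<forall>j\<in>{1..k}. - (pi/2) \<le> \<theta>h j \<and> \<theta>h j \<le> pi/2"
    and "\<epsilon> > 0"
    and "linf_norm k (eta k k (\<lambda>j. exp (\<i> * of_real (\<theta> j))) (\<lambda>j. exp (\<i> * of_real (\<theta>h j))))
           < (2 / pi) ^ k * \<epsilon>"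
    and "Min {\<bar>\<theta> q - \<theta> j\<bar> | q j. q \<in> {1..k} \<and> j \<in> {1..k} \<and> q \<noteq> j}
           \<ge> (4 * \<epsilon> / lam k) powr (1 / real k)"
  shows "\<exists>\<sigma>::nat \<Rightarrow> nat. \<sigma> permutes {1..k} \<and>
    (\<forall>j\<in>{1..k}.
      \<bar>\<theta>h (\<sigma> j) - \<theta> j\<bar> < Min {\<bar>\<theta> q - \<theta> j\<bar> | q j. q \<in> {1..k} \<and> j \<in> {1..k} \<and> q \<noteq> j} / 2 \<and>
      \<bar>\<theta>h (\<sigma> j) - \<theta> j\<bar> \<le> 2 ^ (k - 1) * \<epsilon> /
        (fact (k - 2) * (Min {\<bar>\<theta> q - \<theta> j\<bar> | q j. q \<in> {1..k} \<and> j \<in> {1..k} \<and> q \<noteq> j}) ^ (k - 1)))"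
proof -
  define \<Delta> where "\<Delta> = Min {\<bar>\<theta> q - \<theta> j\<bar> | q j. q \<in> {1..k} \<and> j \<in> {1..k} \<and> q \<noteq> j}"
  have mono: "strict_mono_on {1..k} \<theta>" using assms(3) by (auto intro: strict_mono_onI)
  have sep: "separated \<Delta> {1..k} \<theta>" unfolding \<Delta>_def by (rule separated_Min_pairwise_dist) simp
  have "\<Delta> > 0"
    unfolding \<Delta>_def using assms(1) strict_mono_on_imp_inj_on[OF mono]
    by (intro Min_pairwise_dist_pos[of _ _ 1 2]) auto
  have small: "\<forall>j\<in>{1..k}. (\<Prod>l\<in>{1..k}. \<bar>\<theta> j - \<theta>h l\<bar>) < \<epsilon>"
    using prod_abs_diff_lt_of_linf_norm_eta[OF assms(2,4,6)] by blast
  have "4 * \<epsilon> / lam k \<le> \<Delta> ^ k"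
    using assms(1,5,7) lam_pos[OF assms(1)] by (intro le_power_of_powr_inverse_le) (auto simp: \<Delta>_def)
  then have eps: "4 * \<epsilon> \<le> \<Delta> ^ k * lam k" using lam_pos[OF assms(1)] by (simp add: divide_le_eq)
  have "\<forall>j\<in>{1..k}. \<exists>l\<in>{1..k}. \<bar>\<theta> j - \<theta>h l\<bar> < \<Delta> / 2"
    using exists_root_near_node[OF assms(1) mono sep \<open>\<Delta> > 0\<close> small eps] by blast
  then obtain \<sigma> where \<sigma>: "\<sigma> permutes {1..k}" and close: "\<forall>j\<in>{1..k}. \<bar>\<theta> j - \<theta>h (\<sigma> j)\<bar> < \<Delta> / 2"
    using exists_permutes_within_half_separation[OF _ sep] by blast
  show ?thesis
    unfolding \<Delta>_def[symmetric]
  proof (intro exI conjI ballI)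
    fix j assume j: "j \<in> {1..k}"
    show "\<bar>\<theta>h (\<sigma> j) - \<theta> j\<bar> < \<Delta> / 2" using close j by (simp add: abs_minus_commute)
    show "\<bar>\<theta>h (\<sigma> j) - \<theta> j\<bar> \<le> 2 ^ (k - 1) * \<epsilon> / (fact (k - 2) * \<Delta> ^ (k - 1))"
      using matched_root_error_bound[OF mono sep \<open>\<Delta> > 0\<close> \<sigma> close j small[rule_format, OF j]]
      by (rule less_imp_le)
  qed (rule \<sigma>)
qed

end
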